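(* Suppose $(A,W)$ is a Pratt comonoid and $x_i$ $(i\in I)$ are elements of $W$ such that each $a\in A$ belongs to only finitely many of the $x_i$. Then $\bigcup_{i\in I}x_i\in W$.
   Context: A Pratt comonoid is a pair $(A,W)$ where $A$ is a set and $W$ is a set of subsets of $A$ such that (i) $\emptyset\in W$ and $A\in W$; (ii) whenever $C\subseteq A\times A$ is such that for every $a\in A$ both the $a$-th row $\{b\mid (a,b)\in C\}$ and the $a$-th column $\{b\mid (b,a)\in C\}$ belong to $W$ (a crossword over $W$), the diagonal $\{b\mid (b,b)\in C\}$ also belongs to $W$. *)

theory Defs
  imports Main
begin

definition crossword :: "'a set \<Rightarrow> 'a set set \<Rightarrow> ('a \<times> 'a) set \<Rightarrow> bool" where
  "crossword A W C \<longleftrightarrow> C \<subseteq> A \<times> A \<and>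
     (\<forall>a\<in>A. {b. (a, b) \<in> C} \<in> W \<and> {b. (b, a) \<in> C} \<in> W)"

definition pratt_comonoid :: "'a set \<Rightarrow> 'a set set \<Rightarrow> bool" where
  "pratt_comonoid A W \<longleftrightarrow> (\<forall>x\<in>W. x \<subseteq> A) \<and> {} \<in> W \<and> A \<in> W \<and>
     (\<forall>C. crossword A W C \<longrightarrow> {b. (b, b) \<in> C} \<in> W)"

end

theory Submission
  imports Defs
begin

text \<open>For finitely many members the union is the diagonal of the crossword whose row \<open>a\<close> is
  \<open>A\<close> or \<open>v\<close> according as \<open>a \<in> u\<close>, and whose column \<open>a\<close> is \<open>A\<close> or \<open>u\<close> according as \<open>a \<in> v\<close>.
  For a point-finite family \<open>x\<^sub>i\<close> the union is the diagonal of the symmetric relation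
  \<open>\<Union>\<^sub>i x\<^sub>i \<times> x\<^sub>i\<close>, whose row at \<open>a\<close> is the finite union of the \<open>x\<^sub>i\<close> containing \<open>a\<close>.\<close>

lemma pratt_comonoid_subset:
  "pratt_comonoid A W \<Longrightarrow> u \<in> W \<Longrightarrow> u \<subseteq> A"
  unfolding pratt_comonoid_def by blast

lemma pratt_comonoid_diagonal:
  "pratt_comonoid A W \<Longrightarrow> crossword A W C \<Longrightarrow> {b. (b, b) \<in> C} \<in> W"
  unfolding pratt_comonoid_def by blast

lemma pratt_comonoid_diagonal_sym:
  assumes "pratt_comonoid A W" and "C \<subseteq> A \<times> A" and "sym C"
    and "\<And>a. a \<in> A \<Longrightarrow> {b. (a, b) \<in> C} \<in> W"
  shows "{b. (b, b) \<in> C} \<in> W"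
proof -
  have "{b. (b, a) \<in> C} = {b. (a, b) \<in> C}" for a
    using \<open>sym C\<close> by (auto dest: symD)
  then have "crossword A W C"
    using assms(2,4) unfolding crossword_def by simp
  then show ?thesis
    using pratt_comonoid_diagonal[OF assms(1)] by blast
qed

lemma pratt_comonoid_Un:
  assumes P: "pratt_comonoid A W" and "u \<in> W" and "v \<in> W"
  shows "u \<union> v \<in> W"
proof -
  have uA: "u \<subseteq> A" and vA: "v \<subseteq> A" and AW: "A \<in> W"
    using assms pratt_comonoid_subset[OF P] P unfolding pratt_comonoid_def by auto
  define C where "C = (u \<times> A) \<union> (A \<times> v)"
  have "crossword A W C"
    unfolding crossword_def
  proof (intro conjI ballI)
    show "C \<subseteq> A \<times> A" using uA vA unfolding C_def by auto
  next
    fix a assume "a \<in> A"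
    have "{b. (a, b) \<in> C} = (if a \<in> u then A else v)"
      using \<open>a \<in> A\<close> vA unfolding C_def by auto
    then show "{b. (a, b) \<in> C} \<in> W" using AW \<open>v \<in> W\<close> by simp
    have "{b. (b, a) \<in> C} = (if a \<in> v then A else u)"
      using \<open>a \<in> A\<close> uA unfolding C_def by auto
    then show "{b. (b, a) \<in> C} \<in> W" using AW \<open>u \<in> W\<close> by simp
  qed
  then have "{b. (b, b) \<in> C} \<in> W"
    by (rule pratt_comonoid_diagonal[OF P])
  moreover have "{b. (b, b) \<in> C} = u \<union> v"
    using uA vA unfolding C_def by auto
  ultimately show ?thesis by simp
qed

lemma pratt_comonoid_finite_UN:
  assumes P: "pratt_comonoid A W" and "finite F" and "\<forall>i\<in>F. x i \<in> W"
  shows "(\<Union>i\<in>F. x i) \<in> W"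
  using assms(2,3)
proof (induction F rule: finite_induct)
  case empty
  then show ?case using P unfolding pratt_comonoid_def by simp
next
  case (insert i F)
  then show ?case using pratt_comonoid_Un[OF P] by simp
qed

theorem lemma4p1:
  fixes A :: "'a set" and W :: "'a set set" and I :: "'i set" and x :: "'i \<Rightarrow> 'a set"
  assumes "pratt_comonoid A W"
    and "\<forall>i\<in>I. x i \<in> W"
    and "\<forall>a\<in>A. finite {i\<in>I. a \<in> x i}"
  shows "(\<Union>i\<in>I. x i) \<in> W"
proof -
  define C where "C = (\<Union>i\<in>I. x i \<times> x i)"
  have "{b. (b, b) \<in> C} \<in> W"
  proof (rule pratt_comonoid_diagonal_sym[OF assms(1)])
    show "C \<subseteq> A \<times> A"
      using assms(2) pratt_comonoid_subset[OF assms(1)] unfolding C_def by blast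
    show "sym C"
      unfolding C_def by (auto intro: symI)
    fix a assume "a \<in> A"
    have "{b. (a, b) \<in> C} = (\<Union>i\<in>{i\<in>I. a \<in> x i}. x i)"
      unfolding C_def by auto
    moreover have "(\<Union>i\<in>{i\<in>I. a \<in> x i}. x i) \<in> W"
      using pratt_comonoid_finite_UN[OF assms(1), of "{i\<in>I. a \<in> x i}" x] \<open>a \<in> A\<close> assms(2,3)
      by blast
    ultimately show "{b. (a, b) \<in> C} \<in> W" by simp
  qed
  moreover have "{b. (b, b) \<in> C} = (\<Union>i\<in>I. x i)"
    unfolding C_def by auto
  ultimately show ?thesis by simp
qed

end
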